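(* Let $\{A_n\}_{n\geqslant 1}$ and $\{B_n\}_{n\geqslant 1}$ be two mutually independent sequences of i.i.d. random variables, and let $W_1\geqslant 0$ be a random variable independent of $\{(A_n,B_{n+1})\}_{n\geqslant 1}$. Define $X_{n+1}=B_{n+1}-A_n$ for $n\geqslant 1$ (so $X_2,X_3,\dots$ are i.i.d., distributed as a generic random variable $X$), and define recursively $$W_{n+1}=\max\{0,\,X_{n+1}-W_n\},\qquad n\geqslant 1.$$ Assume $\mathbb{P}[X>0]\in(0,1)$, and let $c(k)=\operatorname{cov}[W_1,W_{1+k}]$ for integers $k\geqslant 0$ (whenever these covariances exist). Then $c(k)\geqslant 0$ if $k$ is even and $c(k)\leqslant 0$ if $k$ is odd. If, in addition, $X$ has a strictly positive density on some interval $(a,b)$ with $0<a<b$, and $W_1$ has the limiting (stationary) waiting-time distribution of the recursion, i.e. $W_1\stackrel{D}{=}W$ where $W$ satisfies $W\stackrel{D}{=}\max\{0,X-W\}$ with $X$ independent of $W$, then $c(k)>0$ for every even $k$ and $c(k)<0$ for every odd $k$.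
   Context: This recursion models a single server alternating between two service points: $B_n$ is the preparation time of customer $n$, $A_n$ the service time of customer $n$, and $W_n$ the time the server waits before serving customer $n$. The distribution of $X$ need not be continuous for the first part of the statement. *)

theory Defs
  imports "HOL-Probability.Probability"
begin

text \<open>Waiting times, with an index shift: wait W1 A B k is W_(1+k).
  wait 0 = W_1 and W_(k+2) = max 0 (X_(k+2) - W_(k+1)) where X_(k+2) = B_(k+2) - A_(k+1).\<close>
primrec wait :: "('a \<Rightarrow> real) \<Rightarrow> (nat \<Rightarrow> 'a \<Rightarrow> real) \<Rightarrow> (nat \<Rightarrow> 'a \<Rightarrow> real) \<Rightarrow> nat \<Rightarrow> 'a \<Rightarrow> real" where
  "wait W1 A B 0 = W1"
| "wait W1 A B (Suc k) = (\<lambda>\<omega>. max 0 ((B (k + 2) \<omega> - A (k + 1) \<omega>) - wait W1 A B k \<omega>))"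

definition cov :: "'a measure \<Rightarrow> ('a \<Rightarrow> real) \<Rightarrow> ('a \<Rightarrow> real) \<Rightarrow> real" where
  "cov M U V = integral\<^sup>L M (\<lambda>\<omega>. (U \<omega> - integral\<^sup>L M U) * (V \<omega> - integral\<^sup>L M V))"

definition cov_exists :: "'a measure \<Rightarrow> ('a \<Rightarrow> real) \<Rightarrow> ('a \<Rightarrow> real) \<Rightarrow> bool" where
  "cov_exists M U V \<longleftrightarrow> integrable M U \<and> integrable M V \<and> integrable M (\<lambda>\<omega>. U \<omega> * V \<omega>)"

definition stationary_law :: "real measure \<Rightarrow> real measure \<Rightarrow> bool" where
  "stationary_law mu nu \<longleftrightarrow> prob_space mu \<and> sets mu = sets borel \<and>
     mu = distr (mu \<Otimes>\<^sub>M nu) borel (\<lambda>(w, x). max 0 (x - w))"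

definition pos_density_on :: "'a measure \<Rightarrow> ('a \<Rightarrow> real) \<Rightarrow> real \<Rightarrow> real \<Rightarrow> bool" where
  "pos_density_on M X a b \<longleftrightarrow> (\<exists>f :: real \<Rightarrow> real. f \<in> borel_measurable borel \<and>
     (\<forall>x\<in>{a<..<b}. f x > 0) \<and>
     (\<forall>S \<in> sets borel. S \<subseteq> {a<..<b} \<longrightarrow>
        emeasure M {\<omega> \<in> space M. X \<omega> \<in> S} = (\<integral>\<^sup>+ x\<in>S. ennreal (f x) \<partial>lborel)))"

end

theory Submission
  imports Defs
begin

text \<open>Along a fixed sample path of the increments X_2, X_3, ..., the waiting time W_(1+k) is a
  function of the initial wait W_1 that is nondecreasing for even k and nonincreasing for odd k.
  Running the same recursion from the constant m = E W_1 gives waiting times W'_(1+k) that are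
  independent of W_1, so cov(W_1, W_(1+k)) = E[(W_1 - m)(W_(1+k) - W'_(1+k))], and the integrand
  has the sign of (-1)^k pointwise. For strictness it suffices that the two paths differ with
  positive probability: the stationary law has an atom at 0 and hence charges every subinterval
  of (a, b), while with positive probability the first k increments all lie in a short interval
  near the top of (a, b); then the maximum in the recursion is never truncated, the path
  depends injectively on W_1, and W_1 can be kept away from m.\<close>

primrec wait_path :: "real \<Rightarrow> (nat \<Rightarrow> real) \<Rightarrow> nat \<Rightarrow> real" where
  "wait_path w y 0 = w"
| "wait_path w y (Suc k) = max 0 (y k - wait_path w y k)"

lemma wait_eq_wait_path: "wait W A B k \<omega> = wait_path (W \<omega>) (\<lambda>n. B (n + 2) \<omega> - A (n + 1) \<omega>) k"
  by (induction k) (simp_all add: numeral_2_eq_2)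

lemma measurable_wait_path:
  assumes "w \<in> borel_measurable N" and "\<And>n. (\<lambda>x. y x n) \<in> borel_measurable N"
  shows "(\<lambda>x. wait_path (w x) (y x) k) \<in> borel_measurable N"
  using assms by (induction k) auto

lemma wait_path_alternating_mono:
  assumes "w \<le> w'"
  shows "(even k \<longrightarrow> wait_path w y k \<le> wait_path w' y k) \<and> (odd k \<longrightarrow> wait_path w' y k \<le> wait_path w y k)"
  using assms by (induction k) auto

lemma wait_path_lipschitz: "\<bar>wait_path w y k - wait_path w' y k\<bar> \<le> \<bar>w - w'\<bar>"
  by (induction k) (auto simp: abs_if max_def split: if_splits)

lemma wait_path_inj_untruncated:
  assumes "\<And>j. j < k \<Longrightarrow> wait_path w y j < y j" and "w \<noteq> w'"
  shows "wait_path w y k \<noteq> wait_path w' y k"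
  using assms
proof (induction k)
  case (Suc k)
  then have "wait_path w y k \<noteq> wait_path w' y k" and "wait_path w y k < y k"
    by auto
  then show ?case
    by (auto simp: max_def)
qed simp

text \<open>While the increments stay in (p, p + e), the path never hits the truncation at 0 and
  stays within distance j * e of the alternating sequence w, p - w, w, p - w, ...\<close>
lemma wait_path_untruncated:
  assumes y: "\<And>j. j < k \<Longrightarrow> p < y j \<and> y j < p + e" and "0 \<le> e"
    and w_lower: "real k * e < w" and w_upper: "w + real k * e < p" and "j < k"
  shows "wait_path w y j < y j"
proof -
  define c :: "nat \<Rightarrow> real" where "c j = (if even j then w else p - w)" for j
  have below: "wait_path w y j < y j" if "j < k" "wait_path w y j \<le> c j + real j * e" for j
  proof -
    have "real j * e \<le> real k * e"
      using \<open>j < k\<close> \<open>0 \<le> e\<close> by (simp add: mult_right_mono)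
    moreover have "c j + real k * e < p"
      using w_lower w_upper by (simp add: c_def)
    ultimately show ?thesis
      using that y[OF \<open>j < k\<close>] by linarith
  qed
  have band: "\<bar>wait_path w y j - c j\<bar> \<le> real j * e" if "j \<le> k" for j
    using that
  proof (induction j)
    case (Suc j)
    then have "wait_path w y j < y j"
      by (intro below) (auto simp: abs_le_iff)
    then have "wait_path w y (Suc j) = y j - wait_path w y j"
      by simp
    with Suc y[of j] show ?case
      by (auto simp: c_def abs_le_iff algebra_simps)
  qed (simp add: c_def)
  show ?thesis
    using band[of j] \<open>j < k\<close> by (intro below) (auto simp: abs_le_iff)
qed

lemma (in prob_space) cov_eq_expectation_mult:
  assumes "cov_exists M U V"
  shows "cov M U V = expectation (\<lambda>\<omega>. U \<omega> * V \<omega>) - expectation U * expectation V"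
  using assms prob_space
  by (simp add: cov_def cov_exists_def left_diff_distrib right_diff_distrib)

lemma (in prob_space) cov_eq_centered_diff:
  assumes "cov_exists M U V" and "integrable M h" "integrable M (\<lambda>\<omega>. U \<omega> * h \<omega>)"
    and "expectation (\<lambda>\<omega>. U \<omega> * h \<omega>) = expectation U * expectation h"
  shows "cov M U V = expectation (\<lambda>\<omega>. (U \<omega> - expectation U) * (V \<omega> - h \<omega>))"
  using assms prob_space
  by (simp add: cov_eq_expectation_mult cov_exists_def left_diff_distrib right_diff_distrib)

lemma pos_density_on_interval_pos:
  assumes "pos_density_on M X a b" and "a \<le> \<alpha>" "\<alpha> < \<beta>" "\<beta> \<le> b"
  shows "emeasure M {\<omega> \<in> space M. X \<omega> \<in> {\<alpha><..<\<beta>}} > 0"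
proof -
  obtain f :: "real \<Rightarrow> real" where f_meas: "f \<in> borel_measurable borel"
    and f_pos: "\<forall>x\<in>{a<..<b}. f x > 0"
    and density: "\<forall>S \<in> sets borel. S \<subseteq> {a<..<b} \<longrightarrow>
        emeasure M {\<omega> \<in> space M. X \<omega> \<in> S} = (\<integral>\<^sup>+ x\<in>S. ennreal (f x) \<partial>lborel)"
    using assms(1) unfolding pos_density_on_def by blast
  let ?S = "{\<alpha><..<\<beta>}"
  have "?S \<subseteq> {a<..<b}"
    using assms by auto
  have "(\<integral>\<^sup>+ x\<in>?S. ennreal (f x) \<partial>lborel) \<noteq> 0"
  proof
    assume "(\<integral>\<^sup>+ x\<in>?S. ennreal (f x) \<partial>lborel) = 0"
    then have "AE x in lborel. ennreal (f x) * indicator ?S x = 0"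
      using f_meas by (simp add: nn_integral_0_iff_AE)
    then have "AE x in lborel. x \<notin> ?S"
      by eventually_elim (use f_pos \<open>?S \<subseteq> {a<..<b}\<close> in \<open>fastforce simp: indicator_def ennreal_eq_0_iff subset_eq\<close>)
    then have "?S \<in> null_sets lborel"
      using AE_iff_null_sets[of ?S lborel] by simp
    then show False
      using \<open>\<alpha> < \<beta>\<close> by auto
  qed
  moreover have "emeasure M {\<omega> \<in> space M. X \<omega> \<in> ?S} = (\<integral>\<^sup>+ x\<in>?S. ennreal (f x) \<partial>lborel)"
    using \<open>?S \<subseteq> {a<..<b}\<close> by (intro density[rule_format]) auto
  ultimately show ?thesis
    by (simp add: zero_less_iff_neq_zero)
qed

lemma stationary_law_lower_bound:
  assumes "stationary_law \<mu> \<nu>" and "prob_space \<nu>" and sets_\<nu>: "sets \<nu> = sets borel"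
    and S: "S \<in> sets borel" "S1 \<in> sets borel" "S2 \<in> sets borel"
    and into_S: "\<And>w x. w \<in> S1 \<Longrightarrow> x \<in> S2 \<Longrightarrow> max 0 (x - w) \<in> S"
  shows "emeasure \<mu> S1 * emeasure \<nu> S2 \<le> emeasure \<mu> S"
proof -
  have sets_\<mu>: "sets \<mu> = sets borel"
    and \<mu>_eq: "\<mu> = distr (\<mu> \<Otimes>\<^sub>M \<nu>) borel (\<lambda>(w, x). max 0 (x - w))"
    using assms(1) unfolding stationary_law_def by auto
  interpret \<nu>: sigma_finite_measure \<nu>
    using \<open>prob_space \<nu>\<close> by (rule prob_space_imp_sigma_finite)
  have "(\<lambda>(w, x). max 0 (x - w)) \<in> borel_measurable (borel \<Otimes>\<^sub>M (borel :: real measure))"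
    by measurable
  then have \<Phi>_meas: "(\<lambda>(w, x). max 0 (x - w)) \<in> borel_measurable (\<mu> \<Otimes>\<^sub>M \<nu>)"
    using sets_pair_measure_cong[OF sets_\<mu> sets_\<nu>] by (simp cong: measurable_cong_sets)
  have "emeasure \<mu> S1 * emeasure \<nu> S2 = emeasure (\<mu> \<Otimes>\<^sub>M \<nu>) (S1 \<times> S2)"
    using \<nu>.emeasure_pair_measure_Times[of S1 \<mu> S2] S sets_\<mu> sets_\<nu> by simp
  also have "\<dots> \<le> emeasure (\<mu> \<Otimes>\<^sub>M \<nu>) ((\<lambda>(w, x). max 0 (x - w)) -` S \<inter> space (\<mu> \<Otimes>\<^sub>M \<nu>))"
    using into_S measurable_sets[OF \<Phi>_meas S(1)] sets_eq_imp_space_eq[OF sets_\<mu>] sets_eq_imp_space_eq[OF sets_\<nu>]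
    by (intro emeasure_mono) (auto simp: space_pair_measure)
  also have "\<dots> = emeasure \<mu> S"
    by (subst (2) \<mu>_eq) (simp add: emeasure_distr[OF \<Phi>_meas S(1)])
  finally show ?thesis .
qed

text \<open>W = 0 whenever X \<le> 0, so \<mu> has an atom at 0; from there, X \<in> S puts the next wait in S.\<close>
lemma stationary_law_emeasure_pos:
  assumes st: "stationary_law \<mu> \<nu>" and \<nu>: "prob_space \<nu>" "sets \<nu> = sets borel"
    and nonneg: "emeasure \<mu> {0..} = 1" and X_nonpos: "0 < emeasure \<nu> {..0}"
    and S: "S \<in> sets borel" "S \<subseteq> {0..}" "0 < emeasure \<nu> S"
  shows "0 < emeasure \<mu> S"
proof -
  have "emeasure \<mu> {0..} * emeasure \<nu> {..0} \<le> emeasure \<mu> {0}"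
    by (rule stationary_law_lower_bound[OF st \<nu>]) auto
  with nonneg X_nonpos have "0 < emeasure \<mu> {0}"
    by simp
  moreover have "emeasure \<mu> {0} * emeasure \<nu> S \<le> emeasure \<mu> S"
    using S by (intro stationary_law_lower_bound[OF st \<nu>]) (auto simp: subset_eq max_def)
  ultimately show ?thesis
    using S(3) by (metis ennreal_zero_less_mult_iff order_less_le_trans)
qed

lemma (in prob_space) indep_vars_indep_var:
  assumes "indep_vars M' X I" and "i \<in> I" "j \<in> I" "i \<noteq> j"
  shows "indep_var (M' i) (X i) (M' j) (X j)"
proof -
  have "indep_var (M' i) ((\<lambda>f. f i) \<circ> (\<lambda>\<omega>. restrict (\<lambda>i. X i \<omega>) {i}))
      (M' j) ((\<lambda>f. f j) \<circ> (\<lambda>\<omega>. restrict (\<lambda>i. X i \<omega>) {j}))"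
    using assms
    by (intro indep_var_compose[OF indep_var_restrict[OF assms(1)]] measurable_component_singleton) auto
  then show ?thesis
    by (simp add: comp_def)
qed

lemma (in prob_space) distr_diff_indep_var:
  fixes U V :: "'a \<Rightarrow> real"
  assumes "indep_var borel U borel V"
  shows "distr M borel (\<lambda>\<omega>. V \<omega> - U \<omega>) = distr (distr M borel U \<Otimes>\<^sub>M distr M borel V) borel (\<lambda>(x, y). y - x)"
proof -
  have [measurable]: "U \<in> borel_measurable M" "V \<in> borel_measurable M"
    using assms by (auto dest: indep_var_rv1 indep_var_rv2)
  have "distr M borel U \<Otimes>\<^sub>M distr M borel V = distr M (borel \<Otimes>\<^sub>M borel) (\<lambda>\<omega>. (U \<omega>, V \<omega>))"
    using assms by (simp add: indep_var_distribution_eq)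
  then show ?thesis
    by (simp add: distr_distr comp_def)
qed

locale iid_service_times = prob_space +
  fixes A B :: "nat \<Rightarrow> 'a \<Rightarrow> real"
  assumes indep_AB: "indep_vars (\<lambda>_. borel) (\<lambda>i. case i of Inl n \<Rightarrow> A n | Inr n \<Rightarrow> B n)
      ({Inl n | n. n \<ge> 1} \<union> {Inr n | n. n \<ge> 1})"
    and ident_A: "\<And>n. n \<ge> 1 \<Longrightarrow> distr M borel (A n) = distr M borel (A 1)"
    and ident_B: "\<And>n. n \<ge> 1 \<Longrightarrow> distr M borel (B n) = distr M borel (B 1)"
begin

lemma A_measurable [measurable]: "A (n + 1) \<in> borel_measurable M"
  and B_measurable [measurable]: "B (n + 1) \<in> borel_measurable M"
proof -
  have "random_variable borel (case i of Inl n \<Rightarrow> A n | Inr n \<Rightarrow> B n)"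
    if "i \<in> {Inl n | n. n \<ge> 1} \<union> {Inr n | n. n \<ge> 1}" for i
    using indep_AB that unfolding indep_vars_def by blast
  from this[of "Inl (n + 1)"] this[of "Inr (n + 1)"]
  show "A (n + 1) \<in> borel_measurable M" "B (n + 1) \<in> borel_measurable M"
    by auto
qed

lemma indep_increments: "indep_vars (\<lambda>_. borel) (\<lambda>j \<omega>. B (j + 2) \<omega> - A (j + 1) \<omega>) UNIV"
proof -
  let ?Z = "\<lambda>i. case i of Inl n \<Rightarrow> A n | Inr n \<Rightarrow> B n"
  define K where "K j = {Inl (j + 1), Inr (j + 2)}" for j :: nat
  have "indep_vars (\<lambda>j. PiM (K j) (\<lambda>_. borel)) (\<lambda>j \<omega>. restrict (\<lambda>i. ?Z i \<omega>) (K j)) UNIV"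
    by (rule indep_vars_restrict[OF indep_AB]) (auto simp: K_def disjoint_family_on_def)
  then have "indep_vars (\<lambda>_. borel)
      (\<lambda>j \<omega>. (\<lambda>f. f (Inr (j + 2)) - f (Inl (j + 1))) (restrict (\<lambda>i. ?Z i \<omega>) (K j))) UNIV"
    by (rule indep_vars_compose2)
      (auto simp: K_def intro!: borel_measurable_diff measurable_component_singleton)
  then show ?thesis
    by (simp add: K_def)
qed

lemma increment_measurable [measurable]: "(\<lambda>\<omega>. B (j + 2) \<omega> - A (j + 1) \<omega>) \<in> borel_measurable M"
  using A_measurable[of j] B_measurable[of "j + 1"] by (intro borel_measurable_diff) simp_all

lemma distr_increment: "distr M borel (\<lambda>\<omega>. B (j + 2) \<omega> - A (j + 1) \<omega>) = distr M borel (\<lambda>\<omega>. B 2 \<omega> - A 1 \<omega>)"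
proof -
  have "distr M borel (\<lambda>\<omega>. B (j + 2) \<omega> - A (j + 1) \<omega>) =
      distr (distr M borel (A 1) \<Otimes>\<^sub>M distr M borel (B 1)) borel (\<lambda>(x, y). y - x)" for j
  proof -
    have "indep_var borel (A (j + 1)) borel (B (j + 2))"
      using indep_vars_indep_var[OF indep_AB, of "Inl (j + 1)" "Inr (j + 2)"] by simp
    then show ?thesis
      by (simp only: distr_diff_indep_var ident_A[of "j + 1"] ident_B[of "j + 2"])
  qed
  from this[of j] this[of 0] show ?thesis
    by (simp add: numeral_2_eq_2)
qed

lemma prob_increment_in:
  assumes "T \<in> sets borel"
  shows "prob ((\<lambda>\<omega>. B (j + 2) \<omega> - A (j + 1) \<omega>) -` T \<inter> space M) = prob {\<omega> \<in> space M. B 2 \<omega> - A 1 \<omega> \<in> T}"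
proof -
  have "prob ((\<lambda>\<omega>. B (j + 2) \<omega> - A (j + 1) \<omega>) -` T \<inter> space M)
      = measure (distr M borel (\<lambda>\<omega>. B (j + 2) \<omega> - A (j + 1) \<omega>)) T"
    using assms by (simp only: measure_distr increment_measurable)
  also have "\<dots> = measure (distr M borel (\<lambda>\<omega>. B 2 \<omega> - A 1 \<omega>)) T"
    by (simp only: distr_increment)
  also have "\<dots> = prob {\<omega> \<in> space M. B 2 \<omega> - A 1 \<omega> \<in> T}"
    using measure_distr[OF increment_measurable[of 0] assms]
    by (simp add: vimage_def Int_def conj_commute numeral_2_eq_2)
  finally show ?thesis .
qed

lemma prob_increments_in:
  assumes "T \<in> sets borel"
  shows "prob {\<omega> \<in> space M. \<forall>j<k. B (j + 2) \<omega> - A (j + 1) \<omega> \<in> T}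
    = prob {\<omega> \<in> space M. B 2 \<omega> - A 1 \<omega> \<in> T} ^ k"
proof (cases "k = 0")
  case False
  have "{\<omega> \<in> space M. \<forall>j<k. B (j + 2) \<omega> - A (j + 1) \<omega> \<in> T}
      = (\<Inter>j<k. (\<lambda>\<omega>. B (j + 2) \<omega> - A (j + 1) \<omega>) -` T \<inter> space M)"
    using False by auto
  also have "prob \<dots> = (\<Prod>j<k. prob ((\<lambda>\<omega>. B (j + 2) \<omega> - A (j + 1) \<omega>) -` T \<inter> space M))"
    using False assms by (intro indep_varsD[OF indep_increments]) auto
  also have "\<dots> = (\<Prod>j<k. prob {\<omega> \<in> space M. B 2 \<omega> - A 1 \<omega> \<in> T})"
    by (simp only: prob_increment_in[OF assms])
  finally show ?thesis
    by simp
qed (simp add: prob_space)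

lemma prob_increments_in_interval_pos:
  assumes "pos_density_on M (\<lambda>\<omega>. B 2 \<omega> - A 1 \<omega>) a b" and "a \<le> p" "p < q" "q \<le> b"
  shows "0 < prob {\<omega> \<in> space M. \<forall>j<k. B (j + 2) \<omega> - A (j + 1) \<omega> \<in> {p<..<q}}"
proof -
  have "0 < prob {\<omega> \<in> space M. B 2 \<omega> - A 1 \<omega> \<in> {p<..<q}}"
    using pos_density_on_interval_pos[OF assms] by (simp add: emeasure_eq_measure)
  then show ?thesis
    by (subst prob_increments_in) auto
qed

end

locale waiting_times = prob_space +
  fixes A B :: "nat \<Rightarrow> 'a \<Rightarrow> real" and W1 :: "'a \<Rightarrow> real"
  assumes A_measurable [measurable]: "A (n + 1) \<in> borel_measurable M"
    and B_measurable [measurable]: "B (n + 2) \<in> borel_measurable M"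
    and W1_measurable [measurable]: "W1 \<in> borel_measurable M"
    and indep_W1: "indep_set (sets (vimage_algebra (space M) W1 borel))
      (sets (vimage_algebra (space M) (\<lambda>\<omega> n. (A (n + 1) \<omega>, B (n + 2) \<omega>)) (PiM UNIV (\<lambda>_. borel \<Otimes>\<^sub>M borel))))"
begin

lemma increment_measurable [measurable]: "(\<lambda>\<omega>. B (n + 2) \<omega> - A (n + 1) \<omega>) \<in> borel_measurable M"
  by measurable

lemma wait_measurable [measurable]:
  assumes "W \<in> borel_measurable M"
  shows "wait W A B k \<in> borel_measurable M"
proof -
  have "(\<lambda>\<omega>. wait_path (W \<omega>) (\<lambda>n. B (n + 2) \<omega> - A (n + 1) \<omega>) k) \<in> borel_measurable M"
    using assms increment_measurable by (rule measurable_wait_path)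
  then show ?thesis
    by (simp add: wait_eq_wait_path[abs_def])
qed

lemma indep_W1_increments_fun:
  assumes G: "G \<in> measurable (PiM UNIV (\<lambda>_. borel)) L"
  shows "indep_set (sets (vimage_algebra (space M) W1 borel))
    (sets (vimage_algebra (space M) (\<lambda>\<omega>. G (\<lambda>n. B (n + 2) \<omega> - A (n + 1) \<omega>)) L))"
proof -
  let ?N = "PiM UNIV (\<lambda>_::nat. borel \<Otimes>\<^sub>M borel :: (real \<times> real) measure)"
  let ?F = "\<lambda>\<omega> n. (A (n + 1) \<omega>, B (n + 2) \<omega>)"
  have "(\<lambda>v. snd (v n) - fst (v n)) \<in> borel_measurable ?N" for n
    by measurable
  then have "(\<lambda>v n. snd (v n) - fst (v n)) \<in> measurable ?N (PiM UNIV (\<lambda>_. borel))"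
    by (intro measurable_PiM_single') auto
  with G have G_diff: "(\<lambda>v. G (\<lambda>n. snd (v n) - fst (v n))) \<in> measurable ?N L"
    by measurable
  have "sets (vimage_algebra (space M) (\<lambda>\<omega>. G (\<lambda>n. B (n + 2) \<omega> - A (n + 1) \<omega>)) L)
      \<subseteq> sets (vimage_algebra (space M) ?F ?N)"
  proof (rule sets_image_in_sets'[OF sets_vimage_algebra_space])
    fix S assume "S \<in> sets L"
    then have "(\<lambda>\<omega>. G (\<lambda>n. B (n + 2) \<omega> - A (n + 1) \<omega>)) -` S \<inter> space M
        = ?F -` ((\<lambda>v. G (\<lambda>n. snd (v n) - fst (v n))) -` S \<inter> space ?N) \<inter> space M"
      by (auto simp: space_PiM space_pair_measure)
    also have "\<dots> \<in> sets (vimage_algebra (space M) ?F ?N)"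
      using measurable_sets[OF G_diff \<open>S \<in> sets L\<close>] by (rule in_vimage_algebra)
    finally show "(\<lambda>\<omega>. G (\<lambda>n. B (n + 2) \<omega> - A (n + 1) \<omega>)) -` S \<inter> space M
        \<in> sets (vimage_algebra (space M) ?F ?N)" .
  qed
  with indep_W1 show ?thesis
    unfolding indep_sets2_eq by blast
qed

lemma indep_W1_wait_const: "indep_var borel W1 borel (wait (\<lambda>_. c) A B k)"
proof -
  have "(\<lambda>y. wait_path c y k) \<in> borel_measurable (PiM UNIV (\<lambda>_. borel))"
    by (intro measurable_wait_path) auto
  then have "indep_set (sets (vimage_algebra (space M) W1 borel))
      (sets (vimage_algebra (space M) (\<lambda>\<omega>. wait_path c (\<lambda>n. B (n + 2) \<omega> - A (n + 1) \<omega>) k) borel))"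
    by (rule indep_W1_increments_fun)
  then show ?thesis
    using wait_measurable[of "\<lambda>_. c" k]
    by (simp add: indep_var_eq sets_vimage_algebra wait_eq_wait_path[abs_def])
qed

definition coupling_diff :: "nat \<Rightarrow> 'a \<Rightarrow> real" where
  "coupling_diff k \<omega> = (W1 \<omega> - expectation W1) * (wait W1 A B k \<omega> - wait (\<lambda>_. expectation W1) A B k \<omega>)"

lemma coupling_diff_sign: "(even k \<longrightarrow> 0 \<le> coupling_diff k \<omega>) \<and> (odd k \<longrightarrow> coupling_diff k \<omega> \<le> 0)"
  using wait_path_alternating_mono[of "W1 \<omega>" "expectation W1" k]
    wait_path_alternating_mono[of "expectation W1" "W1 \<omega>" k]
  by (cases "W1 \<omega> \<le> expectation W1")
    (auto simp: coupling_diff_def wait_eq_wait_path mult_le_0_iff zero_le_mult_iff)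

lemma integrable_wait_const:
  assumes "integrable M W1" and "integrable M (wait W1 A B k)"
  shows "integrable M (wait (\<lambda>_. c) A B k)"
proof (rule Bochner_Integration.integrable_bound)
  show "integrable M (\<lambda>\<omega>. \<bar>wait W1 A B k \<omega>\<bar> + \<bar>W1 \<omega> - c\<bar>)"
    using assms by auto
  have "norm (wait (\<lambda>_. c) A B k \<omega>) \<le> norm (\<bar>wait W1 A B k \<omega>\<bar> + \<bar>W1 \<omega> - c\<bar>)" for \<omega>
    using wait_path_lipschitz[of c "\<lambda>n. B (n + 2) \<omega> - A (n + 1) \<omega>" k "W1 \<omega>"]
    by (simp add: wait_eq_wait_path)
  then show "AE \<omega> in M. norm (wait (\<lambda>_. c) A B k \<omega>) \<le> norm (\<bar>wait W1 A B k \<omega>\<bar> + \<bar>W1 \<omega> - c\<bar>)"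
    by simp
qed simp

lemma cov_wait_eq_coupling:
  assumes "cov_exists M W1 (wait W1 A B k)"
  shows "cov M W1 (wait W1 A B k) = expectation (coupling_diff k)"
    and "integrable M (coupling_diff k)"
proof -
  let ?h = "wait (\<lambda>_. expectation W1) A B k"
  have W1: "integrable M W1" and V: "integrable M (wait W1 A B k)"
    and "integrable M (\<lambda>\<omega>. W1 \<omega> * wait W1 A B k \<omega>)"
    using assms by (auto simp: cov_exists_def)
  moreover have h: "integrable M ?h"
    using W1 V by (rule integrable_wait_const)
  moreover have "integrable M (\<lambda>\<omega>. W1 \<omega> * ?h \<omega>)"
    "expectation (\<lambda>\<omega>. W1 \<omega> * ?h \<omega>) = expectation W1 * expectation ?h"
    using indep_var_integrable[OF indep_W1_wait_const W1 h] indep_var_lebesgue_integral[OF indep_W1_wait_const W1 h]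
    by simp_all
  ultimately show "cov M W1 (wait W1 A B k) = expectation (coupling_diff k)"
    and "integrable M (coupling_diff k)"
    using assms by (simp_all add: cov_eq_centered_diff coupling_diff_def[abs_def] left_diff_distrib right_diff_distrib)
qed

theorem cov_wait_alternating_sign:
  assumes "cov_exists M W1 (wait W1 A B k)"
  shows "(even k \<longrightarrow> 0 \<le> cov M W1 (wait W1 A B k)) \<and> (odd k \<longrightarrow> cov M W1 (wait W1 A B k) \<le> 0)"
  using coupling_diff_sign[of k] Bochner_Integration.integral_nonneg[of M "coupling_diff k"]
    Bochner_Integration.integral_nonneg[of M "\<lambda>\<omega>. - coupling_diff k \<omega>"]
  by (auto simp: cov_wait_eq_coupling[OF assms])

theorem cov_wait_strict_alternating_sign:
  assumes "cov_exists M W1 (wait W1 A B k)"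
    and sensitive: "0 < prob {\<omega> \<in> space M. wait W1 A B k \<omega> \<noteq> wait (\<lambda>_. expectation W1) A B k \<omega>}"
  shows "(even k \<longrightarrow> 0 < cov M W1 (wait W1 A B k)) \<and> (odd k \<longrightarrow> cov M W1 (wait W1 A B k) < 0)"
proof -
  note cov_eq = cov_wait_eq_coupling[OF assms(1)]
  let ?E = "{\<omega> \<in> space M. wait W1 A B k \<omega> \<noteq> wait (\<lambda>_. expectation W1) A B k \<omega>}"
  have E: "?E \<in> events" "emeasure M ?E \<noteq> 0"
    using sensitive by (auto simp: emeasure_eq_measure)
  have nonzero: "AE \<omega> in M. \<omega> \<in> ?E \<longrightarrow> coupling_diff k \<omega> \<noteq> 0"
    by (auto simp: coupling_diff_def wait_eq_wait_path)
  show ?thesis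
  proof (intro conjI impI)
    assume "even k"
    then have "(\<integral>\<omega>. 0 \<partial>M) < expectation (coupling_diff k)"
      using coupling_diff_sign[of k] cov_eq E nonzero
      by (intro integral_less_AE[where A = ?E]) (auto simp: eq_commute[of 0])
    with cov_eq show "0 < cov M W1 (wait W1 A B k)"
      by simp
  next
    assume "odd k"
    then have "expectation (coupling_diff k) < (\<integral>\<omega>. 0 \<partial>M)"
      using coupling_diff_sign[of k] cov_eq E nonzero
      by (intro integral_less_AE[where A = ?E]) auto
    with cov_eq show "cov M W1 (wait W1 A B k) < 0"
      by simp
  qed
qed

lemma wait_sensitive_to_W1:
  assumes "0 < a" "a < b"
    and W1_charges: "\<And>\<alpha> \<beta>. a \<le> \<alpha> \<Longrightarrow> \<alpha> < \<beta> \<Longrightarrow> \<beta> \<le> b \<Longrightarrow>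
      0 < prob {\<omega> \<in> space M. W1 \<omega> \<in> {\<alpha><..<\<beta>}}"
    and increments_charge: "\<And>p q. a \<le> p \<Longrightarrow> p < q \<Longrightarrow> q \<le> b \<Longrightarrow>
      0 < prob {\<omega> \<in> space M. \<forall>j<k. B (j + 2) \<omega> - A (j + 1) \<omega> \<in> {p<..<q}}"
  shows "0 < prob {\<omega> \<in> space M. wait W1 A B k \<omega> \<noteq> wait (\<lambda>_. c) A B k \<omega>}"
proof -
  define d where "d = (b - a) / 4"
  define p where "p = a + 3 * d"
  define e where "e = min d a / (real k + 1)"
  have "0 < d" "4 * d = b - a"
    using assms by (simp_all add: d_def)
  then have "0 < e"
    using \<open>0 < a\<close> by (simp add: e_def)
  have "real k * e + e = min d a"
    by (simp add: e_def add_divide_distrib[symmetric] field_simps)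
  moreover have "0 \<le> real k * e"
    using \<open>0 < e\<close> by simp
  ultimately have "e \<le> d" "real k * e < min d a"
    using \<open>0 < e\<close> by linarith+
  obtain \<alpha> where \<alpha>: "\<alpha> = a \<or> \<alpha> = a + d" and c_notin: "c \<notin> {\<alpha><..<\<alpha> + d}"
  proof (cases "c \<in> {a<..<a + d}")
    case True
    then show ?thesis
      by (intro that[of "a + d"]) auto
  qed auto
  let ?E1 = "{\<omega> \<in> space M. W1 \<omega> \<in> {\<alpha><..<\<alpha> + d}}"
  let ?T = "{y \<in> space (PiM UNIV (\<lambda>_. borel)). \<forall>j<k. y j \<in> {p<..<p + e}}"
  let ?E2 = "{\<omega> \<in> space M. \<forall>j<k. B (j + 2) \<omega> - A (j + 1) \<omega> \<in> {p<..<p + e}}"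
  have E1_in: "?E1 \<in> sets (vimage_algebra (space M) W1 borel)"
    using in_vimage_algebra[of "{\<alpha><..<\<alpha> + d}" borel W1 "space M"] by (simp add: vimage_def Int_def conj_commute)
  have E2_in: "?E2 \<in> sets (vimage_algebra (space M) (\<lambda>\<omega> n. B (n + 2) \<omega> - A (n + 1) \<omega>) (PiM UNIV (\<lambda>_. borel)))"
  proof -
    have "?E2 = (\<lambda>\<omega> n. B (n + 2) \<omega> - A (n + 1) \<omega>) -` ?T \<inter> space M"
      by (auto simp: space_PiM)
    also have "\<dots> \<in> sets (vimage_algebra (space M) (\<lambda>\<omega> n. B (n + 2) \<omega> - A (n + 1) \<omega>) (PiM UNIV (\<lambda>_. borel)))"
      by (rule in_vimage_algebra) measurable
    finally show ?thesis .
  qed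
  have "indep_set (sets (vimage_algebra (space M) W1 borel))
      (sets (vimage_algebra (space M) (\<lambda>\<omega> n. B (n + 2) \<omega> - A (n + 1) \<omega>) (PiM UNIV (\<lambda>_. borel))))"
    by (rule indep_W1_increments_fun[of "\<lambda>y. y"]) (rule measurable_ident_sets, rule refl)
  from indep_setD[OF this E1_in E2_in] have prob_E12: "prob (?E1 \<inter> ?E2) = prob ?E1 * prob ?E2" .
  have subset: "?E1 \<inter> ?E2 \<subseteq> {\<omega> \<in> space M. wait W1 A B k \<omega> \<noteq> wait (\<lambda>_. c) A B k \<omega>}"
  proof
    fix \<omega> assume \<omega>: "\<omega> \<in> ?E1 \<inter> ?E2"
    let ?y = "\<lambda>n. B (n + 2) \<omega> - A (n + 1) \<omega>"
    have "\<And>j. j < k \<Longrightarrow> wait_path (W1 \<omega>) ?y j < ?y j"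
      using \<omega> \<alpha> \<open>0 < e\<close> \<open>real k * e < min d a\<close>
      by (intro wait_path_untruncated[where p = p and e = e]) (auto simp: p_def)
    moreover have "W1 \<omega> \<noteq> c"
      using \<omega> c_notin by auto
    ultimately show "\<omega> \<in> {\<omega> \<in> space M. wait W1 A B k \<omega> \<noteq> wait (\<lambda>_. c) A B k \<omega>}"
      using wait_path_inj_untruncated \<omega> by (simp add: wait_eq_wait_path)
  qed
  have "0 < prob ?E1"
    using \<alpha> \<open>0 < d\<close> \<open>4 * d = b - a\<close> by (intro W1_charges) auto
  moreover have "0 < prob ?E2"
    using \<open>0 < e\<close> \<open>e \<le> d\<close> \<open>0 < d\<close> \<open>4 * d = b - a\<close>
    by (intro increments_charge) (auto simp: p_def)
  ultimately have "0 < prob (?E1 \<inter> ?E2)"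
    unfolding prob_E12 by (rule mult_pos_pos)
  also have "\<dots> \<le> prob {\<omega> \<in> space M. wait W1 A B k \<omega> \<noteq> wait (\<lambda>_. c) A B k \<omega>}"
    using subset by (intro finite_measure_mono) measurable
  finally show ?thesis .
qed

end

lemma (in prob_space) prob_stationary_wait_interval_pos:
  fixes W X :: "'a \<Rightarrow> real"
  assumes [measurable]: "W \<in> borel_measurable M" "X \<in> borel_measurable M"
    and W_nonneg: "\<And>\<omega>. \<omega> \<in> space M \<Longrightarrow> 0 \<le> W \<omega>"
    and X_nonpos: "prob {\<omega> \<in> space M. X \<omega> > 0} < 1"
    and stationary: "stationary_law (distr M borel W) (distr M borel X)"
    and density: "pos_density_on M X a b" and "0 < a" "a \<le> \<alpha>" "\<alpha> < \<beta>" "\<beta> \<le> b"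
  shows "0 < prob {\<omega> \<in> space M. W \<omega> \<in> {\<alpha><..<\<beta>}}"
proof -
  have "emeasure (distr M borel W) {0..} = 1"
    using W_nonneg by (subst emeasure_distr) (auto simp: emeasure_space_1 vimage_def Int_def cong: rev_conj_cong)
  moreover have "0 < emeasure (distr M borel X) {..0}"
  proof -
    have "prob {\<omega> \<in> space M. \<not> X \<omega> > 0} = 1 - prob {\<omega> \<in> space M. X \<omega> > 0}"
      by (rule prob_neg) measurable
    then show ?thesis
      using X_nonpos by (simp add: emeasure_distr vimage_def Int_def conj_commute emeasure_eq_measure not_less)
  qed
  moreover have "0 < emeasure (distr M borel X) {\<alpha><..<\<beta>}"
    using pos_density_on_interval_pos[OF density \<open>a \<le> \<alpha>\<close> \<open>\<alpha> < \<beta>\<close> \<open>\<beta> \<le> b\<close>]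
    by (simp add: emeasure_distr vimage_def Int_def conj_commute)
  ultimately have "0 < emeasure (distr M borel W) {\<alpha><..<\<beta>}"
    using \<open>0 < a\<close> \<open>a \<le> \<alpha>\<close>
    by (intro stationary_law_emeasure_pos[OF stationary prob_space_distr]) auto
  then show ?thesis
    by (simp add: emeasure_distr vimage_def Int_def conj_commute emeasure_eq_measure)
qed

locale lindley_queue = prob_space M + iid: iid_service_times M A B + waiting_times M A B W1
  for M :: "'a measure" and A B :: "nat \<Rightarrow> 'a \<Rightarrow> real" and W1 :: "'a \<Rightarrow> real"
begin

lemma wait_sensitive_to_stationary_W1:
  assumes W1_nonneg: "\<And>\<omega>. \<omega> \<in> space M \<Longrightarrow> 0 \<le> W1 \<omega>"
    and X_nonpos: "prob {\<omega> \<in> space M. B 2 \<omega> - A 1 \<omega> > 0} < 1"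
    and stationary: "stationary_law (distr M borel W1) (distr M borel (\<lambda>\<omega>. B 2 \<omega> - A 1 \<omega>))"
    and density: "pos_density_on M (\<lambda>\<omega>. B 2 \<omega> - A 1 \<omega>) a b" and "0 < a" "a < b"
  shows "0 < prob {\<omega> \<in> space M. wait W1 A B k \<omega> \<noteq> wait (\<lambda>_. c) A B k \<omega>}"
proof (rule wait_sensitive_to_W1[OF \<open>0 < a\<close> \<open>a < b\<close>])
  have X_meas: "(\<lambda>\<omega>. B 2 \<omega> - A 1 \<omega>) \<in> borel_measurable M"
    using iid.increment_measurable[of 0] by (simp add: numeral_2_eq_2)
  show "0 < prob {\<omega> \<in> space M. W1 \<omega> \<in> {\<alpha><..<\<beta>}}"
    if "a \<le> \<alpha>" "\<alpha> < \<beta>" "\<beta> \<le> b" for \<alpha> \<beta>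
    using W1_nonneg X_nonpos stationary density \<open>0 < a\<close> that
    by (rule prob_stationary_wait_interval_pos[OF W1_measurable X_meas])
  show "0 < prob {\<omega> \<in> space M. \<forall>j<k. B (j + 2) \<omega> - A (j + 1) \<omega> \<in> {p<..<q}}"
    if "a \<le> p" "p < q" "q \<le> b" for p q
    using density that by (rule iid.prob_increments_in_interval_pos)
qed

end

theorem theorem2p1:
  fixes M :: "'a measure"
    and A B :: "nat \<Rightarrow> 'a \<Rightarrow> real"
    and W1 :: "'a \<Rightarrow> real"
  assumes P: "prob_space M"
    and indep_AB: "prob_space.indep_vars M (\<lambda>_. borel)
          (\<lambda>i. case i of Inl n \<Rightarrow> A n | Inr n \<Rightarrow> B n)
          ({Inl n | n. n \<ge> 1} \<union> {Inr n | n. n \<ge> 1})"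
    and ident_A: "\<And>n. n \<ge> 1 \<Longrightarrow> distr M borel (A n) = distr M borel (A 1)"
    and ident_B: "\<And>n. n \<ge> 1 \<Longrightarrow> distr M borel (B n) = distr M borel (B 1)"
    and W1_nonneg: "\<And>\<omega>. \<omega> \<in> space M \<Longrightarrow> W1 \<omega> \<ge> 0"
    and W1_meas: "W1 \<in> borel_measurable M"
    and indep_W1: "prob_space.indep_set M
          (sets (vimage_algebra (space M) W1 borel))
          (sets (vimage_algebra (space M) (\<lambda>\<omega> n. (A (n + 1) \<omega>, B (n + 2) \<omega>))
                  (PiM UNIV (\<lambda>_. borel \<Otimes>\<^sub>M borel))))"
    and PX: "prob_space.prob M {\<omega> \<in> space M. B 2 \<omega> - A 1 \<omega> > 0} \<in> {0<..<1}"
  shows "(\<forall>k. cov_exists M W1 (wait W1 A B k) \<longrightarrow>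
            (even k \<longrightarrow> cov M W1 (wait W1 A B k) \<ge> 0) \<and>
            (odd k \<longrightarrow> cov M W1 (wait W1 A B k) \<le> 0))
       \<and> ((\<exists>a b. 0 < a \<and> a < b \<and> pos_density_on M (\<lambda>\<omega>. B 2 \<omega> - A 1 \<omega>) a b)
           \<and> stationary_law (distr M borel W1) (distr M borel (\<lambda>\<omega>. B 2 \<omega> - A 1 \<omega>))
          \<longrightarrow> (\<forall>k. cov_exists M W1 (wait W1 A B k) \<longrightarrow>
            (even k \<longrightarrow> cov M W1 (wait W1 A B k) > 0) \<and>
            (odd k \<longrightarrow> cov M W1 (wait W1 A B k) < 0)))"
proof -
  have iid: "iid_service_times M A B"
    by (intro iid_service_times.intro iid_service_times_axioms.intro P indep_AB ident_A ident_B)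
  have "B (n + 2) \<in> borel_measurable M" for n
    using iid_service_times.B_measurable[OF iid, of "n + 1"] by simp
  then interpret lindley_queue M A B W1
    by (intro lindley_queue.intro P iid waiting_times.intro waiting_times_axioms.intro W1_meas indep_W1
        iid_service_times.A_measurable[OF iid])
  show ?thesis
  proof (intro conjI impI allI)
    fix k assume "cov_exists M W1 (wait W1 A B k)"
    then show "even k \<Longrightarrow> 0 \<le> cov M W1 (wait W1 A B k)" "odd k \<Longrightarrow> cov M W1 (wait W1 A B k) \<le> 0"
      using cov_wait_alternating_sign by blast+
  next
    fix k
    assume "(\<exists>a b. 0 < a \<and> a < b \<and> pos_density_on M (\<lambda>\<omega>. B 2 \<omega> - A 1 \<omega>) a b)
        \<and> stationary_law (distr M borel W1) (distr M borel (\<lambda>\<omega>. B 2 \<omega> - A 1 \<omega>))"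
    with W1_nonneg PX have "0 < prob {\<omega> \<in> space M. wait W1 A B k \<omega> \<noteq> wait (\<lambda>_. expectation W1) A B k \<omega>}"
      using wait_sensitive_to_stationary_W1 by fastforce
    moreover assume "cov_exists M W1 (wait W1 A B k)"
    ultimately show "even k \<Longrightarrow> 0 < cov M W1 (wait W1 A B k)" "odd k \<Longrightarrow> cov M W1 (wait W1 A B k) < 0"
      using cov_wait_strict_alternating_sign by blast+
  qed
qed

end
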